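(* Consider the following model. States $\omega_t\in\{0,1\}$, $t\in\{1,2\}$, with $\Pr[\omega_1=1]=\mu_0\in(0,1)$ and $\Pr[\omega_2=\omega\mid\omega_1=\omega]=\rho\in(1/2,1)$. In each period an agent A chooses $e_t\in\{0,1\}$; if $e_t=1$ he observes $\omega_t$, if $e_t=0$ he observes $\omega_t$ with probability $\pi\in(0,1)$ and nothing otherwise; he reports $r_t\in\{\varnothing,\omega_t\}$ if he observed $\omega_t$, else $r_t=\varnothing$. A's payoff is $x-c(e_1+e_2)$ with $x=\hat x(r_1,r_2)$, and here the testing cost is $c=0$. A mechanism consists of $\sigma_1\in\{0,1\}$, $\sigma_2:\{\varnothing,0,1\}\to\{0,1\}$, $\hat x:\{\varnothing,0,1\}^2\to\{0,1\}$; A best-responds, following the recommendation and disclosing when indifferent. A mechanism is IC if at every history occurring with positive probability A optimally obeys the testing recommendation and discloses every observed result, and $\hat x(r_1,\varnothing)=0$ whenever $\sigma_2(r_1)=1$. Then in any IC mechanism, if $r_1$ (occurring with positive probability) is such that $\sigma_2(r_1)=0$, we must have $\hat x(r_1,0)=\hat x(r_1,1)=\hat x(r_1,\varnothing)$. *)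

theory Defs
  imports Complex_Main
begin

text \<open>Reports / observations: None = empty report (nothing), Some w = state w
  (True = 1, False = 0).\<close>
type_synonym rep = "bool option"

definition pw :: "real \<Rightarrow> bool \<Rightarrow> real" where
  "pw q w = (if w then q else 1 - q)"

definition obsprob :: "real \<Rightarrow> bool \<Rightarrow> real" where
  "obsprob p e = (if e then 1 else p)"

definition belief2 :: "real \<Rightarrow> real \<Rightarrow> rep \<Rightarrow> real" where
  "belief2 mu0 rho o1 = (case o1 of Some w \<Rightarrow> pw rho w
                                  | None \<Rightarrow> mu0 * rho + (1 - mu0) * (1 - rho))"

text \<open>Period-2 expected payoff of choosing e2 after public report r1, with belief q
  on omega_2, reporting optimally after the observation.\<close>
definition val2 :: "(rep \<Rightarrow> rep \<Rightarrow> real) \<Rightarrow> real \<Rightarrow> real \<Rightarrow> rep \<Rightarrow> real \<Rightarrow> bool \<Rightarrow> real" where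
  "val2 x c p r1 q e2 =
     obsprob p e2 * (\<Sum>w\<in>UNIV. pw q w * max (x r1 (Some w)) (x r1 None))
     + (1 - obsprob p e2) * x r1 None - c * of_bool e2"

text \<open>Optimal continuation value at period-2 history (private observation o1, report r1).\<close>
definition cont2 :: "(rep \<Rightarrow> rep \<Rightarrow> real) \<Rightarrow> real \<Rightarrow> real \<Rightarrow> real \<Rightarrow> real \<Rightarrow> rep \<Rightarrow> rep \<Rightarrow> real" where
  "cont2 x c p mu0 rho o1 r1 =
     max (val2 x c p r1 (belief2 mu0 rho o1) True) (val2 x c p r1 (belief2 mu0 rho o1) False)"

definition val1 :: "(rep \<Rightarrow> rep \<Rightarrow> real) \<Rightarrow> real \<Rightarrow> real \<Rightarrow> real \<Rightarrow> real \<Rightarrow> bool \<Rightarrow> real" where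
  "val1 x c p mu0 rho e1 =
     obsprob p e1 * (\<Sum>w\<in>UNIV. pw mu0 w *
         max (cont2 x c p mu0 rho (Some w) (Some w)) (cont2 x c p mu0 rho (Some w) None))
     + (1 - obsprob p e1) * cont2 x c p mu0 rho None None - c * of_bool e1"

text \<open>Probability of period-1 observation (= report, on path) o under obedient play.\<close>
definition reach1 :: "real \<Rightarrow> real \<Rightarrow> bool \<Rightarrow> rep \<Rightarrow> real" where
  "reach1 p mu0 s1 o1 = (case o1 of None \<Rightarrow> 1 - obsprob p s1
                                  | Some w \<Rightarrow> obsprob p s1 * pw mu0 w)"

definition IC :: "real \<Rightarrow> real \<Rightarrow> real \<Rightarrow> real \<Rightarrow> bool \<Rightarrow> (rep \<Rightarrow> bool) \<Rightarrow> (rep \<Rightarrow> rep \<Rightarrow> real) \<Rightarrow> bool" where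
  "IC mu0 rho p c s1 s2 x \<longleftrightarrow>
     val1 x c p mu0 rho s1 \<ge> val1 x c p mu0 rho (\<not> s1)
   \<and> (\<forall>w. reach1 p mu0 s1 (Some w) > 0 \<longrightarrow>
          cont2 x c p mu0 rho (Some w) (Some w) \<ge> cont2 x c p mu0 rho (Some w) None)
   \<and> (\<forall>o1. reach1 p mu0 s1 o1 > 0 \<longrightarrow>
          val2 x c p o1 (belief2 mu0 rho o1) (s2 o1) \<ge> val2 x c p o1 (belief2 mu0 rho o1) (\<not> s2 o1)
        \<and> (\<forall>w. obsprob p (s2 o1) * pw (belief2 mu0 rho o1) w > 0 \<longrightarrow> x o1 (Some w) \<ge> x o1 None))
   \<and> (\<forall>r1. s2 r1 \<longrightarrow> x r1 None = 0)"

end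

theory Submission
  imports Defs
begin

text \<open>With free testing, testing gains over not testing exactly (1 - p) times the option value
  E[max (x r1 w) (x r1 None) - x r1 None] of seeing the result, because an unfavourable result can
  be withheld. If not testing is optimal at r1 this option value vanishes, so every result, having
  positive probability under the interior belief, is worth at most the empty report; obedient
  disclosure gives the reverse inequality. The rewards need not be binary.\<close>

lemma belief2_bounds:
  assumes "0 \<le> mu0" "mu0 \<le> 1" "0 < rho" "rho < 1"
  shows "0 < belief2 mu0 rho o1" "belief2 mu0 rho o1 < 1"
proof -
  have "mu0 * rho + (1 - mu0) * (1 - rho) < 1"
    using assms by (intro convex_bound_lt) auto
  moreover have "mu0 * (1 - rho) + (1 - mu0) * (1 - (1 - rho)) < 1"
    using assms by (intro convex_bound_lt) auto
  ultimately show "0 < belief2 mu0 rho o1" "belief2 mu0 rho o1 < 1"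
    using assms(3,4) by (auto simp: belief2_def pw_def algebra_simps split: option.split)
qed

lemma pw_pos: "0 < q \<Longrightarrow> q < 1 \<Longrightarrow> 0 < pw q w"
  by (simp add: pw_def)

lemma val2_True_minus_False:
  "val2 x 0 p r q True - val2 x 0 p r q False
     = (1 - p) * (\<Sum>w\<in>UNIV. pw q w * (max (x r (Some w)) (x r None) - x r None))"
  by (simp add: val2_def obsprob_def pw_def UNIV_bool algebra_simps)

lemma val2_no_test_optimal_imp_le_None:
  assumes "0 < q" "q < 1" "p < 1"
    and "val2 x 0 p r q True \<le> val2 x 0 p r q False"
  shows "x r (Some w) \<le> x r None"
proof -
  define gain where "gain w = pw q w * (max (x r (Some w)) (x r None) - x r None)" for w
  have gain_nonneg: "0 \<le> gain w" for w
    using assms(1,2) by (simp add: gain_def pw_def)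
  have "(1 - p) * (\<Sum>w\<in>UNIV. gain w) \<le> 0"
    using assms(4) val2_True_minus_False[of x p r q] unfolding gain_def by linarith
  then have "gain True + gain False \<le> 0"
    using assms(3) by (simp add: UNIV_bool mult_le_0_iff)
  then have "gain w \<le> 0"
    using gain_nonneg[of True] gain_nonneg[of False] by (cases w) auto
  then have "max (x r (Some w)) (x r None) - x r None \<le> 0"
    using pw_pos[OF assms(1,2), of w] by (simp add: gain_def mult_le_0_iff)
  then show ?thesis by simp
qed

theorem lemma6:
  fixes mu0 rho p c :: real and s1 :: bool and s2 :: "rep \<Rightarrow> bool"
    and x :: "rep \<Rightarrow> rep \<Rightarrow> real" and r1 :: rep
  assumes "0 < mu0" "mu0 < 1" "1/2 < rho" "rho < 1" "0 < p" "p < 1" "c = 0"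
    and "\<forall>a b. x a b \<in> {0, 1}"
    and "IC mu0 rho p c s1 s2 x"
    and "reach1 p mu0 s1 r1 > 0"
    and "\<not> s2 r1"
  shows "x r1 (Some False) = x r1 (Some True) \<and> x r1 (Some True) = x r1 None"
proof -
  define q where "q = belief2 mu0 rho r1"
  have q: "0 < q" "q < 1"
    using belief2_bounds assms(1-4) unfolding q_def by auto
  have no_test: "val2 x 0 p r1 q True \<le> val2 x 0 p r1 q False"
   and disclose: "\<And>w. 0 < p * pw q w \<Longrightarrow> x r1 None \<le> x r1 (Some w)"
    using assms(7,9-11) unfolding IC_def q_def by (auto simp: obsprob_def)
  have "x r1 (Some w) = x r1 None" for w
    using val2_no_test_optimal_imp_le_None[OF q assms(6) no_test]
      disclose[of w] pw_pos[OF q] assms(5) by (simp add: order_antisym)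
  then show ?thesis by simp
qed

end
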